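(* Let $k_u(n)$ be the largest $k$ such that Maker has a strategy in the $k$-tournament-type game on $K_n$ guaranteeing that, at the end of the game, her digraph contains a copy of every tournament on $k$ vertices. Then $k_u(n)\le(1+o(1))\log_2 n$ as $n\to\infty$.
   Context: The game: Maker (moving first) and Breaker alternately claim one unclaimed edge of $K_n$, and each chooses an orientation for the claimed edge; the game ends when all edges are claimed. A tournament is a digraph with exactly one directed edge between each pair of distinct vertices. *)

theory Defs
  imports Complex_Main
begin

text \<open>Vertices of K_n are 0..n-1. A claimed edge together with its orientation is an
arc (u,v). Maker's digraph is the set M of arcs she claimed, Breaker's is B.\<close>

definition claimed :: "(nat \<times> nat) set \<Rightarrow> nat \<Rightarrow> nat \<Rightarrow> bool" where
  "claimed A u v \<longleftrightarrow> (u, v) \<in> A \<or> (v, u) \<in> A"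

definition legal_move :: "nat \<Rightarrow> (nat \<times> nat) set \<Rightarrow> (nat \<times> nat) set \<Rightarrow> nat \<times> nat \<Rightarrow> bool" where
  "legal_move n M B a \<longleftrightarrow> fst a < n \<and> snd a < n \<and> fst a \<noteq> snd a
      \<and> \<not> claimed (M \<union> B) (fst a) (snd a)"

definition game_over :: "nat \<Rightarrow> (nat \<times> nat) set \<Rightarrow> (nat \<times> nat) set \<Rightarrow> bool" where
  "game_over n M B \<longleftrightarrow> (\<forall>a. \<not> legal_move n M B a)"

definition is_tournament :: "nat \<Rightarrow> (nat \<times> nat) set \<Rightarrow> bool" where
  "is_tournament k T \<longleftrightarrow> T \<subseteq> {0..<k} \<times> {0..<k}
     \<and> (\<forall>i<k. (i, i) \<notin> T)
     \<and> (\<forall>i<k. \<forall>j<k. i \<noteq> j \<longrightarrow> ((i, j) \<in> T \<longleftrightarrow> (j, i) \<notin> T))"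

definition contains_copy :: "nat \<Rightarrow> (nat \<times> nat) set \<Rightarrow> nat \<Rightarrow> (nat \<times> nat) set \<Rightarrow> bool" where
  "contains_copy n D k T \<longleftrightarrow> (\<exists>f. inj_on f {0..<k} \<and> f ` {0..<k} \<subseteq> {0..<n}
      \<and> (\<forall>(i, j) \<in> T. (f i, f j) \<in> D))"

definition universal_goal :: "nat \<Rightarrow> nat \<Rightarrow> (nat \<times> nat) set \<Rightarrow> bool" where
  "universal_goal n k D \<longleftrightarrow> (\<forall>T. is_tournament k T \<longrightarrow> contains_copy n D k T)"

text \<open>maker_wins n k M B t: from the position in which Maker owns arcs M, Breaker owns arcs B,
and it is Maker's turn iff t, Maker has a strategy guaranteeing that her final digraph
contains a copy of every tournament on k vertices (finite game, so the least fixed point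
is exactly the set of winning positions).\<close>
inductive maker_wins :: "nat \<Rightarrow> nat \<Rightarrow> (nat \<times> nat) set \<Rightarrow> (nat \<times> nat) set \<Rightarrow> bool \<Rightarrow> bool"
  for n k where
  end_win: "game_over n M B \<Longrightarrow> universal_goal n k M \<Longrightarrow> maker_wins n k M B t"
| maker_move: "legal_move n M B a \<Longrightarrow> maker_wins n k (insert a M) B False
      \<Longrightarrow> maker_wins n k M B True"
| breaker_move: "\<not> game_over n M B
      \<Longrightarrow> (\<forall>a. legal_move n M B a \<longrightarrow> maker_wins n k M (insert a B) True)
      \<Longrightarrow> maker_wins n k M B False"

definition k_u :: "nat \<Rightarrow> nat" where
  "k_u n = (GREATEST k. maker_wins n k {} {} True)"

end

theory Submission
  imports Defs
begin

text \<open>Let Breaker claim, at each of her turns, a free edge of maximal danger, in the spirit of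
the Erdos-Selfridge potential argument. A k-tuple of vertices weighs 0 if Breaker owns an edge
between two of its entries and otherwise 2 to the number of Maker's edges between its entries; the
potential is the total weight of all n^k tuples. A Maker move raises the potential by the danger of
her edge (the weight of the tuples spanning it), a Breaker move lowers it by the danger of hers,
and Breaker moves never increase any danger. So under Breaker's greedy play the potential plus,
when Maker is to move, the maximal danger never increases, and initially it is at most 2 n^k.
If Maker's final digraph contains every tournament on k vertices, the 2^(k choose 2) tournaments
orienting the pairs i < j forwards exactly on a given set of pairs embed as distinct tuples of
weight 2^(k choose 2). Hence 4^(k choose 2) \<le> 2 n^k, which forces k \<le> log2 n + 2.\<close>

definition increasing_pairs :: "'a::linorder set \<Rightarrow> ('a \<times> 'a) set" where
  "increasing_pairs S = {p \<in> S \<times> S. fst p < snd p}"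

definition edge :: "nat \<times> nat \<Rightarrow> nat \<times> nat" where
  "edge a = (min (fst a) (snd a), max (fst a) (snd a))"

definition pair_weight :: "(nat \<times> nat) set \<Rightarrow> (nat \<times> nat) set \<Rightarrow> nat \<times> nat \<Rightarrow> nat" where
  "pair_weight M B p =
     (if claimed B (fst p) (snd p) then 0 else if claimed M (fst p) (snd p) then 2 else 1)"

definition tuple_weight :: "(nat \<times> nat) set \<Rightarrow> (nat \<times> nat) set \<Rightarrow> nat list \<Rightarrow> nat" where
  "tuple_weight M B xs = (\<Prod>p\<in>increasing_pairs (set xs). pair_weight M B p)"

text \<open>Tuples may repeat vertices; such tuples merely add nonnegative terms to the potential.\<close>

definition tuples :: "nat \<Rightarrow> nat \<Rightarrow> nat list set" where
  "tuples n k = {xs. set xs \<subseteq> {..<n} \<and> length xs = k}"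

definition potential :: "nat \<Rightarrow> nat \<Rightarrow> (nat \<times> nat) set \<Rightarrow> (nat \<times> nat) set \<Rightarrow> nat" where
  "potential n k M B = (\<Sum>xs\<in>tuples n k. tuple_weight M B xs)"

definition danger :: "nat \<Rightarrow> nat \<Rightarrow> (nat \<times> nat) set \<Rightarrow> (nat \<times> nat) set \<Rightarrow> nat \<times> nat \<Rightarrow> nat" where
  "danger n k M B e =
     (\<Sum>xs\<in>tuples n k. if e \<in> increasing_pairs (set xs) then tuple_weight M B xs else 0)"

definition max_danger :: "nat \<Rightarrow> nat \<Rightarrow> (nat \<times> nat) set \<Rightarrow> (nat \<times> nat) set \<Rightarrow> nat" where
  "max_danger n k M B = Max (insert 0 ((\<lambda>a. danger n k M B (edge a)) ` {a. legal_move n M B a}))"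

definition position_value ::
  "nat \<Rightarrow> nat \<Rightarrow> (nat \<times> nat) set \<Rightarrow> (nat \<times> nat) set \<Rightarrow> bool \<Rightarrow> nat" where
  "position_value n k M B t = potential n k M B + (if t then max_danger n k M B else 0)"

definition consistent_position :: "(nat \<times> nat) set \<Rightarrow> (nat \<times> nat) set \<Rightarrow> bool" where
  "consistent_position M B \<longleftrightarrow> asym M \<and> (\<forall>u v. claimed M u v \<longrightarrow> \<not> claimed B u v)"

lemma card_increasing_pairs:
  fixes S :: "'a::linorder set"
  assumes "finite S"
  shows "card (increasing_pairs S) = card S choose 2"
proof -
  define A where "A = increasing_pairs S"
  define A' where "A' = {p \<in> S \<times> S. snd p < fst p}"
  define D where "D = (\<lambda>x. (x, x)) ` S"
  have finite: "finite A" "finite A'" "finite D"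
    using assms unfolding A_def A'_def D_def increasing_pairs_def by auto
  have "S \<times> S = A \<union> A' \<union> D" "A \<inter> A' = {}" "(A \<union> A') \<inter> D = {}"
    unfolding A_def A'_def D_def increasing_pairs_def by (auto simp: image_iff)
  then have "card S * card S = card A + card A' + card D"
    using finite by (simp add: card_Un_disjoint flip: card_cartesian_product)
  moreover have "A' = (\<lambda>(x, y). (y, x)) ` A"
    unfolding A_def A'_def increasing_pairs_def by auto
  then have "card A' = card A"
    by (simp, subst card_image) (auto simp: inj_on_def)
  moreover have "card D = card S"
    unfolding D_def by (simp add: card_image inj_on_def)
  ultimately have "card A = card S * (card S - 1) div 2"
    by (simp add: algebra_simps diff_mult_distrib2)
  then show ?thesis
    unfolding A_def by (simp add: choose_two)
qed

lemma finite_tuples: "finite (tuples n k)"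
  unfolding tuples_def by (rule finite_lists_length_eq) simp

lemma card_tuples: "card (tuples n k) = n ^ k"
  unfolding tuples_def by (simp add: card_lists_length_eq)

lemma finite_increasing_pairs: "finite S \<Longrightarrow> finite (increasing_pairs S)"
  unfolding increasing_pairs_def by simp

lemma finite_legal_moves: "finite {a. legal_move n M B a}"
  by (rule finite_subset[of _ "{..<n} \<times> {..<n}"]) (auto simp: legal_move_def)

lemma legal_move_insert_Maker: "legal_move n (insert a M) B b \<Longrightarrow> legal_move n M B b \<and> b \<noteq> a"
  by (auto simp: legal_move_def claimed_def)

lemma legal_move_insert_Breaker: "legal_move n M (insert a B) b \<Longrightarrow> legal_move n M B b \<and> b \<noteq> a"
  by (auto simp: legal_move_def claimed_def)

lemma consistent_position_insert_Maker:
  "consistent_position M B \<Longrightarrow> legal_move n M B a \<Longrightarrow> consistent_position (insert a M) B"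
  by (cases a) (auto simp: consistent_position_def asym_on_def claimed_def legal_move_def)

lemma consistent_position_insert_Breaker:
  "consistent_position M B \<Longrightarrow> legal_move n M B a \<Longrightarrow> consistent_position M (insert a B)"
  by (cases a) (auto simp: consistent_position_def claimed_def legal_move_def)

lemma pair_weight_edge: "legal_move n M B a \<Longrightarrow> pair_weight M B (edge a) = 1"
  by (cases a) (auto simp: pair_weight_def claimed_def legal_move_def edge_def min_def max_def)

lemma pair_weight_insert_Maker:
  assumes "legal_move n M B a" "fst p < snd p"
  shows "pair_weight (insert a M) B p = (if p = edge a then 2 else pair_weight M B p)"
  using assms by (cases a; cases p)
    (auto simp: pair_weight_def claimed_def legal_move_def edge_def min_def max_def)

lemma pair_weight_insert_Breaker:
  assumes "legal_move n M B a" "fst p < snd p"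
  shows "pair_weight M (insert a B) p = (if p = edge a then 0 else pair_weight M B p)"
  using assms by (cases a; cases p)
    (auto simp: pair_weight_def claimed_def legal_move_def edge_def min_def max_def)

lemma tuple_weight_update:
  assumes free: "pair_weight M B (edge a) = 1"
    and other: "\<And>p. fst p < snd p \<Longrightarrow> p \<noteq> edge a \<Longrightarrow> pair_weight M' B' p = pair_weight M B p"
  shows "tuple_weight M' B' xs = (if edge a \<in> increasing_pairs (set xs)
      then pair_weight M' B' (edge a) * tuple_weight M B xs else tuple_weight M B xs)"
proof -
  let ?P = "increasing_pairs (set xs)"
  have finite: "finite ?P"
    by (simp add: finite_increasing_pairs)
  have agree: "(\<Prod>p\<in>?P - {edge a}. pair_weight M' B' p) = (\<Prod>p\<in>?P - {edge a}. pair_weight M B p)"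
    using other by (intro prod.cong) (auto simp: increasing_pairs_def)
  show ?thesis
  proof (cases "edge a \<in> ?P")
    case True
    then show ?thesis
      using finite agree free unfolding tuple_weight_def by (simp add: prod.remove)
  next
    case False
    then have "?P - {edge a} = ?P"
      by simp
    then show ?thesis
      using agree False unfolding tuple_weight_def by simp
  qed
qed

lemma tuple_weight_insert_Maker:
  assumes "legal_move n M B a"
  shows "tuple_weight (insert a M) B xs =
    (if edge a \<in> increasing_pairs (set xs) then 2 * tuple_weight M B xs else tuple_weight M B xs)"
proof -
  have "pair_weight (insert a M) B (edge a) = 2"
    using assms
    by (cases a) (auto simp: pair_weight_def claimed_def legal_move_def edge_def min_def max_def)
  then show ?thesis
    using tuple_weight_update[OF pair_weight_edge[OF assms], of "insert a M" B xs]
      pair_weight_insert_Maker[OF assms] by simp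
qed

lemma tuple_weight_insert_Breaker:
  assumes "legal_move n M B a"
  shows "tuple_weight M (insert a B) xs =
    (if edge a \<in> increasing_pairs (set xs) then 0 else tuple_weight M B xs)"
proof -
  have "pair_weight M (insert a B) (edge a) = 0"
    using assms
    by (cases a) (auto simp: pair_weight_def claimed_def legal_move_def edge_def min_def max_def)
  then show ?thesis
    using tuple_weight_update[OF pair_weight_edge[OF assms], of M "insert a B" xs]
      pair_weight_insert_Breaker[OF assms] by simp
qed

lemma potential_insert_Maker:
  "legal_move n M B a \<Longrightarrow>
    potential n k (insert a M) B = potential n k M B + danger n k M B (edge a)"
  unfolding potential_def danger_def
  by (auto simp: tuple_weight_insert_Maker simp flip: sum.distrib intro!: sum.cong)

lemma potential_insert_Breaker:
  "legal_move n M B a \<Longrightarrow>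
    potential n k M (insert a B) + danger n k M B (edge a) = potential n k M B"
  unfolding potential_def danger_def
  by (auto simp: tuple_weight_insert_Breaker simp flip: sum.distrib intro!: sum.cong)

lemma danger_insert_Breaker_le:
  "legal_move n M B a \<Longrightarrow> danger n k M (insert a B) e \<le> danger n k M B e"
  unfolding danger_def by (rule sum_mono) (simp add: tuple_weight_insert_Breaker)

lemma danger_le_potential: "danger n k M B e \<le> potential n k M B"
  unfolding danger_def potential_def by (rule sum_mono) simp

lemma danger_le_max_danger: "legal_move n M B a \<Longrightarrow> danger n k M B (edge a) \<le> max_danger n k M B"
  unfolding max_danger_def by (rule Max_ge) (use finite_legal_moves in auto)

lemma max_danger_le:
  "(\<And>a. legal_move n M B a \<Longrightarrow> danger n k M B (edge a) \<le> z) \<Longrightarrow> max_danger n k M B \<le> z"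
  unfolding max_danger_def by (subst Max_le_iff) (use finite_legal_moves in auto)

lemma position_value_Maker_move:
  "legal_move n M B a \<Longrightarrow> position_value n k (insert a M) B False \<le> position_value n k M B True"
  unfolding position_value_def by (simp add: potential_insert_Maker danger_le_max_danger)

lemma position_value_greedy_Breaker_move:
  assumes "\<not> game_over n M B"
  obtains b where "legal_move n M B b"
    and "position_value n k M (insert b B) True \<le> position_value n k M B False"
proof -
  define dangers where "dangers = (\<lambda>a. danger n k M B (edge a)) ` {a. legal_move n M B a}"
  have finite: "finite dangers"
    unfolding dangers_def using finite_legal_moves by simp
  have "dangers \<noteq> {}"
    using assms unfolding dangers_def game_over_def by auto
  then have "Max dangers \<in> dangers"
    using finite by (rule Max_in[rotated])
  then obtain b where b: "legal_move n M B b" "Max dangers = danger n k M B (edge b)"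
    unfolding dangers_def by blast
  have "max_danger n k M (insert b B) \<le> danger n k M B (edge b)"
  proof (rule max_danger_le)
    fix a
    assume "legal_move n M (insert b B) a"
    then have "danger n k M B (edge a) \<in> dangers"
      using legal_move_insert_Breaker unfolding dangers_def by blast
    then have "danger n k M B (edge a) \<le> danger n k M B (edge b)"
      using Max_ge[OF finite] b(2) by simp
    then show "danger n k M (insert b B) (edge a) \<le> danger n k M B (edge b)"
      using danger_insert_Breaker_le[OF b(1)] le_trans by blast
  qed
  then have "position_value n k M (insert b B) True \<le> position_value n k M B False"
    unfolding position_value_def using potential_insert_Breaker[OF b(1), of k] by simp
  with b(1) show thesis
    by (rule that)
qed

definition tournament_of :: "nat \<Rightarrow> (nat \<times> nat) set \<Rightarrow> (nat \<times> nat) set" where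
  "tournament_of k A = A \<union> {(j, i) | i j. (i, j) \<in> increasing_pairs {0..<k} - A}"

lemma is_tournament_tournament_of:
  assumes "A \<subseteq> increasing_pairs {0..<k}"
  shows "is_tournament k (tournament_of k A)"
proof -
  have "(i, j) \<in> tournament_of k A \<longleftrightarrow> (j, i) \<notin> tournament_of k A"
    if "i < k" "j < k" "i \<noteq> j" for i j
    using that assms unfolding tournament_of_def increasing_pairs_def
    by (cases "i < j") (auto simp: subset_iff dest: less_asym)
  moreover have "tournament_of k A \<subseteq> {0..<k} \<times> {0..<k}" "\<forall>i<k. (i, i) \<notin> tournament_of k A"
    using assms unfolding tournament_of_def increasing_pairs_def by auto
  ultimately show ?thesis
    unfolding is_tournament_def by blast
qed

lemma tournament_of_recovered:
  assumes "A \<subseteq> increasing_pairs {0..<k}" "asym M"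
    and embedding: "\<forall>(i, j) \<in> tournament_of k A. (f i, f j) \<in> M"
  shows "A = {p \<in> increasing_pairs {0..<k}. (f (fst p), f (snd p)) \<in> M}"
proof -
  have "(i, j) \<in> A \<longleftrightarrow> (f i, f j) \<in> M" if ij: "(i, j) \<in> increasing_pairs {0..<k}" for i j
  proof
    assume "(i, j) \<in> A"
    then show "(f i, f j) \<in> M"
      using embedding unfolding tournament_of_def by blast
  next
    assume "(f i, f j) \<in> M"
    then have "(f j, f i) \<notin> M"
      using asymD[OF \<open>asym M\<close>] by blast
    then have "(j, i) \<notin> tournament_of k A"
      using embedding by blast
    then show "(i, j) \<in> A"
      using ij unfolding tournament_of_def by blast
  qed
  then show ?thesis
    using assms(1) by auto
qed

lemma tuple_weight_embedded_tournament:
  assumes "consistent_position M B" "is_tournament k T"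
    and "inj_on f {0..<k}" "\<forall>(i, j) \<in> T. (f i, f j) \<in> M"
  shows "tuple_weight M B (map f [0..<k]) = 2 ^ (k choose 2)"
proof -
  have "pair_weight M B p = 2" if p: "p \<in> increasing_pairs (f ` {0..<k})" for p
  proof -
    obtain i j where ij: "p = (f i, f j)" "i < k" "j < k" "f i < f j"
      using p unfolding increasing_pairs_def by auto
    then have "(i, j) \<in> T \<or> (j, i) \<in> T"
      using \<open>is_tournament k T\<close> unfolding is_tournament_def by (metis less_irrefl)
    then have "claimed M (f i) (f j)"
      using assms(4) unfolding claimed_def by auto
    then show ?thesis
      using assms(1) ij(1) unfolding pair_weight_def consistent_position_def by auto
  qed
  moreover have "card (f ` {0..<k}) = k"
    using assms(3) by (simp add: card_image)
  ultimately show ?thesis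
    unfolding tuple_weight_def by (simp add: card_increasing_pairs)
qed

lemma potential_ge_of_universal_goal:
  assumes "consistent_position M B" "universal_goal n k M"
  shows "4 ^ (k choose 2) \<le> potential n k M B"
proof -
  define E where "E = increasing_pairs {0..<k}"
  have "\<forall>A \<in> Pow E. \<exists>f. inj_on f {0..<k} \<and> f ` {0..<k} \<subseteq> {0..<n}
      \<and> (\<forall>(i, j) \<in> tournament_of k A. (f i, f j) \<in> M)"
  proof
    fix A
    assume "A \<in> Pow E"
    then have "is_tournament k (tournament_of k A)"
      using is_tournament_tournament_of unfolding E_def by blast
    with assms(2) show "\<exists>f. inj_on f {0..<k} \<and> f ` {0..<k} \<subseteq> {0..<n}
        \<and> (\<forall>(i, j) \<in> tournament_of k A. (f i, f j) \<in> M)"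
      unfolding universal_goal_def contains_copy_def by blast
  qed
  from bchoice[OF this] obtain emb where "\<forall>A \<in> Pow E. inj_on (emb A) {0..<k}
      \<and> emb A ` {0..<k} \<subseteq> {0..<n} \<and> (\<forall>(i, j) \<in> tournament_of k A. (emb A i, emb A j) \<in> M)"
    by blast
  then have emb: "inj_on (emb A) {0..<k}" "emb A ` {0..<k} \<subseteq> {0..<n}"
    "\<forall>(i, j) \<in> tournament_of k A. (emb A i, emb A j) \<in> M" if "A \<in> Pow E" for A
    using that by blast+
  define tuple where "tuple A = map (emb A) [0..<k]" for A
  have recovered: "A = {p \<in> E. (emb A (fst p), emb A (snd p)) \<in> M}" if "A \<in> Pow E" for A
    using tournament_of_recovered[of A k M "emb A"] emb(3)[OF that] that assms(1)
    unfolding consistent_position_def E_def by blast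
  have "inj_on tuple (Pow E)"
  proof (rule inj_onI)
    fix A A'
    assume A: "A \<in> Pow E" "A' \<in> Pow E" and "tuple A = tuple A'"
    then have "\<forall>i<k. emb A i = emb A' i"
      unfolding tuple_def by (simp add: map_eq_conv)
    moreover have "\<forall>p \<in> E. fst p < k \<and> snd p < k"
      unfolding E_def increasing_pairs_def by auto
    ultimately have "{p \<in> E. (emb A (fst p), emb A (snd p)) \<in> M}
        = {p \<in> E. (emb A' (fst p), emb A' (snd p)) \<in> M}"
      by (intro Collect_cong) auto
    with A show "A = A'"
      using recovered by blast
  qed
  moreover have "tuple ` Pow E \<subseteq> tuples n k"
  proof (rule image_subsetI)
    fix A
    assume "A \<in> Pow E"
    with emb(2) show "tuple A \<in> tuples n k"
      unfolding tuple_def tuples_def by (simp add: atLeast0LessThan)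
  qed
  moreover have "tuple_weight M B (tuple A) = 2 ^ (k choose 2)" if "A \<in> Pow E" for A
    using tuple_weight_embedded_tournament[OF assms(1) is_tournament_tournament_of emb(1,3)] that
    unfolding tuple_def E_def by simp
  moreover have "card (Pow E) = 2 ^ (k choose 2)"
    unfolding E_def by (simp add: card_Pow finite_increasing_pairs card_increasing_pairs)
  ultimately have "4 ^ (k choose 2) = (\<Sum>xs\<in>tuple ` Pow E. tuple_weight M B xs)"
    by (simp add: sum.reindex flip: power_mult_distrib)
  also have "\<dots> \<le> potential n k M B"
    unfolding potential_def using \<open>tuple ` Pow E \<subseteq> tuples n k\<close>
    by (rule sum_mono2[OF finite_tuples]) simp
  finally show ?thesis .
qed

lemma position_value_ge_of_maker_wins:
  assumes "maker_wins n k M B t" "consistent_position M B"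
  shows "4 ^ (k choose 2) \<le> position_value n k M B t"
  using assms
proof (induction rule: maker_wins.induct)
  case (end_win M B t)
  then have "4 ^ (k choose 2) \<le> potential n k M B"
    by (rule_tac potential_ge_of_universal_goal)
  then show ?case
    unfolding position_value_def by linarith
next
  case (maker_move M B a)
  then have "4 ^ (k choose 2) \<le> position_value n k (insert a M) B False"
    using consistent_position_insert_Maker by blast
  also have "\<dots> \<le> position_value n k M B True"
    using maker_move.hyps(1) by (rule position_value_Maker_move)
  finally show ?case .
next
  case (breaker_move M B)
  obtain b where b: "legal_move n M B b"
    and greedy: "position_value n k M (insert b B) True \<le> position_value n k M B False"
    using position_value_greedy_Breaker_move[OF breaker_move.hyps(1)] by blast
  have "4 ^ (k choose 2) \<le> position_value n k M (insert b B) True"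
    using breaker_move.IH b consistent_position_insert_Breaker[OF breaker_move.prems b] by blast
  with greedy show ?case
    by (rule order.trans[rotated])
qed

lemma position_value_initial: "position_value n k {} {} True \<le> 2 * n ^ k"
proof -
  have "tuple_weight {} {} xs = 1" for xs
    unfolding tuple_weight_def pair_weight_def claimed_def by simp
  then have "potential n k {} {} = n ^ k"
    unfolding potential_def by (simp add: card_tuples)
  moreover have "max_danger n k {} {} \<le> potential n k {} {}"
    by (rule max_danger_le) (rule danger_le_potential)
  ultimately show ?thesis
    unfolding position_value_def by simp
qed

lemma maker_wins_if_goal_trivial:
  assumes "\<And>D. universal_goal n k D"
  shows "maker_wins n k M B t"
proof (induction "card {a. legal_move n M B a}" arbitrary: M B t rule: less_induct)
  case (less M B t)
  have fewer_moves: "card {b. legal_move n M' B' b} < card {b. legal_move n M B b}"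
    if "legal_move n M B a" "{b. legal_move n M' B' b} \<subseteq> {b. legal_move n M B b} - {a}" for a M' B'
  proof -
    have "card {b. legal_move n M' B' b} \<le> card ({b. legal_move n M B b} - {a})"
      using that(2) finite_legal_moves by (intro card_mono) auto
    also have "\<dots> < card {b. legal_move n M B b}"
      using that(1) finite_legal_moves by (intro card_Diff1_less) auto
    finally show ?thesis .
  qed
  show ?case
  proof (cases "game_over n M B")
    case True
    then show ?thesis
      using assms by (rule end_win)
  next
    case False
    then obtain a where a: "legal_move n M B a"
      unfolding game_over_def by blast
    show ?thesis
    proof (cases t)
      case True
      have "{b. legal_move n (insert a M) B b} \<subseteq> {b. legal_move n M B b} - {a}"
        using legal_move_insert_Maker by blast
      then have "maker_wins n k (insert a M) B False"
        by (rule less.hyps[OF fewer_moves[OF a]])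
      with a True show ?thesis
        by (simp add: maker_move)
    next
      case t: False
      have "maker_wins n k M (insert b B) True" if b: "legal_move n M B b" for b
      proof -
        have "{c. legal_move n M (insert b B) c} \<subseteq> {c. legal_move n M B c} - {b}"
          using legal_move_insert_Breaker by blast
        then show ?thesis
          by (rule less.hyps[OF fewer_moves[OF b]])
      qed
      with False t show ?thesis
        by (simp add: breaker_move)
    qed
  qed
qed

lemma maker_wins_bound:
  assumes "maker_wins n k {} {} True"
  shows "4 ^ (k choose 2) \<le> 2 * n ^ k"
proof -
  have "consistent_position {} {}"
    unfolding consistent_position_def claimed_def by simp
  with assms have "4 ^ (k choose 2) \<le> position_value n k {} {} True"
    by (rule position_value_ge_of_maker_wins)
  also have "\<dots> \<le> 2 * n ^ k"
    by (rule position_value_initial)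
  finally show ?thesis .
qed

lemma power_le_of_four_power_choose_two_le:
  fixes n k :: nat
  assumes "4 ^ (k choose 2) \<le> 2 * n ^ k" "2 \<le> k"
  shows "2 ^ (k - 2) \<le> n"
proof (rule ccontr)
  define j where "j = k - 2"
  have k: "k = j + 2"
    using assms(2) unfolding j_def by simp
  assume "\<not> 2 ^ (k - 2) \<le> n"
  then have "n ^ k < (2 ^ j) ^ k"
    unfolding j_def using k by (intro power_strict_mono) auto
  also have "(2 ^ j) ^ k = (2::nat) ^ (j * (j + 2))"
    unfolding k by (rule power_mult[symmetric])
  finally have "2 * n ^ k < 2 ^ (j * (j + 2) + 1)"
    by simp
  also have "\<dots> \<le> 2 ^ ((j + 2) * (j + 1))"
    by (intro power_increasing) (auto simp: algebra_simps)
  also have "(j + 2) * (j + 1) = 2 * (k choose 2)"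
    unfolding k by (simp add: choose_two)
  also have "(2::nat) ^ (2 * (k choose 2)) = 4 ^ (k choose 2)"
    by (simp add: power_mult)
  finally show False
    using assms(1) by simp
qed

lemma k_u_le_log: "1 \<le> n \<Longrightarrow> real (k_u n) \<le> log 2 (real n) + 2"
proof -
  assume "1 \<le> n"
  let ?wins = "\<lambda>k. maker_wins n k {} {} True"
  have "?wins 0"
    by (rule maker_wins_if_goal_trivial)
      (simp add: universal_goal_def is_tournament_def contains_copy_def)
  moreover have "k \<le> n + 2" if "?wins k" for k
  proof (cases "2 \<le> k")
    case True
    have "k - 2 < 2 ^ (k - 2)"
      by (rule less_exp)
    also have "\<dots> \<le> n"
      using maker_wins_bound[OF that] True by (rule power_le_of_four_power_choose_two_le)
    finally show ?thesis
      by simp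
  qed simp
  ultimately have "?wins (k_u n)"
    unfolding k_u_def by (rule GreatestI_nat)
  show ?thesis
  proof (cases "2 \<le> k_u n")
    case True
    have "2 ^ (k_u n - 2) \<le> n"
      using maker_wins_bound[OF \<open>?wins (k_u n)\<close>] True
      by (rule power_le_of_four_power_choose_two_le)
    then have "real (k_u n - 2) \<le> log 2 (real n)"
      by (rule le_log2_of_power)
    with True show ?thesis
      by simp
  next
    case False
    moreover have "0 \<le> log 2 (real n)"
      using \<open>1 \<le> n\<close> by simp
    ultimately show ?thesis
      by simp
  qed
qed

theorem mainTheorem10:
  shows "\<forall>\<epsilon>>0. \<forall>\<^sub>F n in sequentially. real (k_u n) \<le> (1 + \<epsilon>) * log 2 (real n)"
proof (intro allI impI)
  fix \<epsilon> :: real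
  assume "\<epsilon> > 0"
  show "\<forall>\<^sub>F n in sequentially. real (k_u n) \<le> (1 + \<epsilon>) * log 2 (real n)"
    using eventually_ge_at_top[of "nat \<lceil>2 powr (2 / \<epsilon>)\<rceil> + 1"]
  proof (rule eventually_mono)
    fix n
    assume "nat \<lceil>2 powr (2 / \<epsilon>)\<rceil> + 1 \<le> n"
    then have "1 \<le> n" "2 powr (2 / \<epsilon>) \<le> real n"
      by linarith+
    then have "2 / \<epsilon> \<le> log 2 (real n)"
      by (simp add: le_log_iff)
    then have "2 \<le> \<epsilon> * log 2 (real n)"
      using \<open>\<epsilon> > 0\<close> by (simp add: field_simps)
    with k_u_le_log[OF \<open>1 \<le> n\<close>] show "real (k_u n) \<le> (1 + \<epsilon>) * log 2 (real n)"
      by (simp add: algebra_simps)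
  qed
qed

end
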